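(* Let $\mathcal F$ be a nice family of graphs, let $G$ be a graph containing no member of $\mathcal F$ as a subgraph, and let $u,v$ be non-adjacent vertices of $G$. Let $G'$ be obtained from $G$ by symmetrizing $u$ to $v$. Then $G'$ contains no member of $\mathcal F$ as a subgraph.
   Context: Symmetrizing a vertex $u$ to a vertex $v$ in a graph means deleting all edges incident to $u$ and then adding all edges $uw$ where $w$ is a neighbor of $v$ (so the new neighborhood of $u$ equals that of $v$). A (finite or infinite) sequence of graphs $F_1,F_2,\dots$ is nice if for every $i$ and every two non-adjacent vertices $u,v$ of $F_i$, the graph obtained from $F_i$ by joining both $u$ and $v$ to every vertex of $N(u)\cup N(v)$ contains some $F_j$ with $j<i$ as a subgraph. A family $\mathcal F$ of graphs is nice if its elements can be ordered to form a nice sequence. *)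

theory Defs
  imports Main
begin

type_synonym 'a graph = "'a set \<times> ('a \<Rightarrow> 'a \<Rightarrow> bool)"

definition is_graph :: "'a graph \<Rightarrow> bool" where
  "is_graph G \<longleftrightarrow> finite (fst G) \<and>
     (\<forall>x y. snd G x y \<longrightarrow> x \<in> fst G \<and> y \<in> fst G) \<and>
     (\<forall>x y. snd G x y \<longrightarrow> snd G y x) \<and>
     (\<forall>x. \<not> snd G x x)"

definition nbhd :: "'a graph \<Rightarrow> 'a \<Rightarrow> 'a set" where
  "nbhd G x = {y. snd G x y}"

definition subgraph_of :: "'b graph \<Rightarrow> 'a graph \<Rightarrow> bool" where
  "subgraph_of H G \<longleftrightarrow> (\<exists>f. inj_on f (fst H) \<and> f ` fst H \<subseteq> fst G \<and>
     (\<forall>x\<in>fst H. \<forall>y\<in>fst H. snd H x y \<longrightarrow> snd G (f x) (f y)))"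

definition symmetrize :: "'a graph \<Rightarrow> 'a \<Rightarrow> 'a \<Rightarrow> 'a graph" where
  "symmetrize G u v = (fst G, (\<lambda>x y.
     if x = u then (y \<noteq> u \<and> snd G v y)
     else if y = u then snd G v x
     else snd G x y))"

definition join_both :: "'a graph \<Rightarrow> 'a \<Rightarrow> 'a \<Rightarrow> 'a graph" where
  "join_both G u v = (fst G, (\<lambda>x y. snd G x y \<or>
     ((x = u \<or> x = v) \<and> y \<in> nbhd G u \<union> nbhd G v) \<or>
     ((y = u \<or> y = v) \<and> x \<in> nbhd G u \<union> nbhd G v)))"

definition nice_seq :: "nat set \<Rightarrow> (nat \<Rightarrow> 'b graph) \<Rightarrow> bool" where
  "nice_seq I F \<longleftrightarrow> (I = UNIV \<or> (\<exists>n. I = {..<n})) \<and>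
     (\<forall>i\<in>I. \<forall>u\<in>fst (F i). \<forall>v\<in>fst (F i). u \<noteq> v \<longrightarrow> \<not> snd (F i) u v \<longrightarrow>
        (\<exists>j\<in>I. j < i \<and> subgraph_of (F j) (join_both (F i) u v)))"

definition nice_family :: "'b graph set \<Rightarrow> bool" where
  "nice_family \<F> \<longleftrightarrow> (\<exists>I F. nice_seq I F \<and> inj_on F I \<and> F ` I = \<F>)"

end

theory Submission
  imports Defs
begin

text \<open>Suppose some member of \<F> embeds into G' = symmetrize G u v, and take one, H, that is
earliest in the nice sequence. In G' the vertices u and v are non-adjacent twins, and G'
agrees with G away from u. As H does not embed into G, the embedding must hit u, say at a;
it must also hit v, say at b, since otherwise rerouting a to the twin v would give an
embedding into G. Because u and v are twins, the same map embeds the graph obtained from H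
by joining a and b to N(a) \<union> N(b) into G'; by niceness that graph contains an earlier
member of \<F>, contradicting minimality.\<close>

definition embedding :: "('b \<Rightarrow> 'a) \<Rightarrow> 'b graph \<Rightarrow> 'a graph \<Rightarrow> bool" where
  "embedding f H G \<longleftrightarrow> inj_on f (fst H) \<and> f ` fst H \<subseteq> fst G \<and>
     (\<forall>x\<in>fst H. \<forall>y\<in>fst H. snd H x y \<longrightarrow> snd G (f x) (f y))"

lemma subgraph_of_iff_embedding: "subgraph_of H G \<longleftrightarrow> (\<exists>f. embedding f H G)"
  unfolding subgraph_of_def embedding_def by blast

lemma embedding_comp:
  assumes "embedding g K H" and "embedding f H G"
  shows "embedding (f \<circ> g) K G"
proof -
  have "inj_on (f \<circ> g) (fst K)"
    using assms unfolding embedding_def by (meson comp_inj_on inj_on_subset)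
  then show ?thesis
    using assms unfolding embedding_def by (simp add: image_subset_iff)
qed

lemma subgraph_of_trans: "subgraph_of K H \<Longrightarrow> subgraph_of H G \<Longrightarrow> subgraph_of K G"
  using embedding_comp unfolding subgraph_of_iff_embedding by blast

lemma is_graph_adj_sym: "is_graph G \<Longrightarrow> snd G x y = snd G y x"
  unfolding is_graph_def by blast

lemma is_graph_not_adj_self: "is_graph G \<Longrightarrow> \<not> snd G x x"
  unfolding is_graph_def by blast

lemma adj_twin_left: "nbhd G u = nbhd G v \<Longrightarrow> snd G u z = snd G v z"
  unfolding nbhd_def by (metis mem_Collect_eq)

lemma adj_twin_right: "is_graph G \<Longrightarrow> nbhd G u = nbhd G v \<Longrightarrow> snd G z u = snd G z v"
  using adj_twin_left is_graph_adj_sym by metis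

lemma embedding_fun_upd_twin:
  assumes G: "is_graph G" and f: "embedding f H G" and fa: "f a = u"
    and twins: "nbhd G u = nbhd G v" and v: "v \<in> fst G" and v_free: "v \<notin> f ` fst H"
  shows "embedding (f(a := v)) H G"
proof -
  have "snd G ((f(a := v)) x) z = snd G (f x) z" for x z
    using adj_twin_left[OF twins] fa by auto
  moreover have "snd G z ((f(a := v)) x) = snd G z (f x)" for x z
    using adj_twin_right[OF G twins] fa by auto
  ultimately show ?thesis
    using f v v_free unfolding embedding_def by (auto intro: inj_on_fun_updI)
qed

lemma embedding_join_both_twins:
  assumes G: "is_graph G" and f: "embedding f H G" and "a \<in> fst H" and "b \<in> fst H"
    and twins: "nbhd G (f a) = nbhd G (f b)"
  shows "embedding f (join_both H a b) G"
proof -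
  have join_adj: "snd G (f x) (f y)"
    if "x = a \<or> x = b" and "y \<in> nbhd H a \<union> nbhd H b" and "y \<in> fst H" for x y
  proof -
    have "snd G (f a) (f y) \<or> snd G (f b) (f y)"
      using f that assms(3,4) unfolding embedding_def nbhd_def by blast
    then have "snd G (f a) (f y) \<and> snd G (f b) (f y)"
      using adj_twin_left[OF twins] by blast
    then show ?thesis
      using that(1) by blast
  qed
  have "snd G (f x) (f y)" if "x \<in> fst H" "y \<in> fst H" "snd (join_both H a b) x y" for x y
  proof -
    have "snd H x y \<or> ((x = a \<or> x = b) \<and> y \<in> nbhd H a \<union> nbhd H b) \<or>
        ((y = a \<or> y = b) \<and> x \<in> nbhd H a \<union> nbhd H b)"
      using that(3) unfolding join_both_def by simp
    then show ?thesis
      using that f join_adj[of x y] join_adj[of y x] is_graph_adj_sym[OF G, of "f x" "f y"]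
      unfolding embedding_def by blast
  qed
  then show ?thesis
    using f unfolding embedding_def by (simp add: join_both_def)
qed

lemma symmetrize_adj_off: "x \<noteq> u \<Longrightarrow> y \<noteq> u \<Longrightarrow> snd (symmetrize G u v) x y = snd G x y"
  unfolding symmetrize_def by simp

lemma symmetrize_self: "is_graph G \<Longrightarrow> symmetrize G u u = G"
  unfolding symmetrize_def
  by (auto intro!: prod_eqI simp: fun_eq_iff is_graph_not_adj_self is_graph_adj_sym)

lemma is_graph_symmetrize:
  assumes "is_graph G" and "u \<in> fst G" and "v \<in> fst G"
  shows "is_graph (symmetrize G u v)"
  using assms unfolding is_graph_def symmetrize_def by auto

lemma nbhd_symmetrize_twins:
  assumes "is_graph G"
  shows "nbhd (symmetrize G u v) u = nbhd (symmetrize G u v) v"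
  using is_graph_not_adj_self[OF assms]
  unfolding nbhd_def symmetrize_def by auto

lemma symmetrize_not_adj: "is_graph G \<Longrightarrow> \<not> snd (symmetrize G u v) u v"
  unfolding symmetrize_def by (simp add: is_graph_not_adj_self)

lemma embedding_symmetrize_avoiding:
  assumes "embedding f H (symmetrize G u v)" and "u \<notin> f ` fst H"
  shows "embedding f H G"
proof -
  have "snd G (f x) (f y)" if "x \<in> fst H" "y \<in> fst H" "snd H x y" for x y
  proof -
    have "f x \<noteq> u" "f y \<noteq> u" using assms(2) that by auto
    then show ?thesis
      using assms(1) that symmetrize_adj_off[of "f x" u "f y" G v] unfolding embedding_def by simp
  qed
  then show ?thesis
    using assms(1) unfolding embedding_def by (simp add: symmetrize_def)
qed

lemma subgraph_of_symmetrize_join_both: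
  assumes G: "is_graph G" and u: "u \<in> fst G" and v: "v \<in> fst G"
    and sub: "subgraph_of H (symmetrize G u v)" and not_sub: "\<not> subgraph_of H G"
  shows "\<exists>a\<in>fst H. \<exists>b\<in>fst H. a \<noteq> b \<and> \<not> snd H a b \<and>
           subgraph_of (join_both H a b) (symmetrize G u v)"
proof -
  define G' where "G' = symmetrize G u v"
  have G': "is_graph G'" using is_graph_symmetrize[OF G u v] by (simp add: G'_def)
  have twins: "nbhd G' u = nbhd G' v" using nbhd_symmetrize_twins[OF G] by (simp add: G'_def)
  have uv: "u \<noteq> v" using sub not_sub symmetrize_self[OF G] by auto
  obtain f where f: "embedding f H G'" using sub unfolding subgraph_of_iff_embedding G'_def ..
  have no_embedding_avoiding_u: "u \<in> g ` fst H" if "embedding g H G'" for g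
    using not_sub embedding_symmetrize_avoiding[OF that[unfolded G'_def]]
    unfolding subgraph_of_iff_embedding by blast
  obtain a where a: "a \<in> fst H" "f a = u" using no_embedding_avoiding_u[OF f] by auto
  have "v \<in> f ` fst H"
  proof (rule ccontr)
    assume v_free: "v \<notin> f ` fst H"
    have "embedding (f(a := v)) H G'"
      using embedding_fun_upd_twin[OF G' f a(2) twins _ v_free] v by (simp add: G'_def symmetrize_def)
    moreover have "u \<notin> (f(a := v)) ` fst H"
      using f a uv unfolding embedding_def by (auto dest: inj_onD)
    ultimately show False using no_embedding_avoiding_u by blast
  qed
  then obtain b where b: "b \<in> fst H" "f b = v" by auto
  have "\<not> snd H a b"
    using f a b symmetrize_not_adj[OF G] unfolding embedding_def G'_def by metis
  moreover have "embedding f (join_both H a b) G'"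
    using embedding_join_both_twins[OF G' f a(1) b(1)] twins a b by simp
  moreover have "a \<noteq> b" using a b uv by auto
  ultimately show ?thesis
    using a(1) b(1) unfolding subgraph_of_iff_embedding G'_def by blast
qed

lemma nice_family_not_subgraph:
  assumes "nice_family \<F>"
    and join_closed: "\<And>H. H \<in> \<F> \<Longrightarrow> subgraph_of H G \<Longrightarrow>
           \<exists>a\<in>fst H. \<exists>b\<in>fst H. a \<noteq> b \<and> \<not> snd H a b \<and> subgraph_of (join_both H a b) G"
  shows "\<forall>H\<in>\<F>. \<not> subgraph_of H G"
proof -
  obtain I F where nice: "nice_seq I F" and \<F>: "F ` I = \<F>"
    using assms(1) unfolding nice_family_def by blast
  have "i \<in> I \<Longrightarrow> \<not> subgraph_of (F i) G" for i
  proof (induction i rule: less_induct)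
    case (less i)
    show ?case
    proof
      assume "subgraph_of (F i) G"
      then obtain a b where ab: "a \<in> fst (F i)" "b \<in> fst (F i)" "a \<noteq> b" "\<not> snd (F i) a b"
        and join: "subgraph_of (join_both (F i) a b) G"
        using join_closed \<F> less.prems by blast
      obtain j where "j \<in> I" "j < i" "subgraph_of (F j) (join_both (F i) a b)"
        using nice less.prems ab unfolding nice_seq_def by blast
      then show False using less.IH join subgraph_of_trans by blast
    qed
  qed
  then show ?thesis using \<F> by blast
qed

theorem proposition4p1:
  fixes \<F> :: "'b graph set" and G :: "'a graph" and u v :: 'a
  assumes "\<forall>H\<in>\<F>. is_graph H"
    and "nice_family \<F>"
    and "is_graph G"
    and "\<forall>H\<in>\<F>. \<not> subgraph_of H G"
    and "u \<in> fst G" and "v \<in> fst G" and "\<not> snd G u v"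
  shows "\<forall>H\<in>\<F>. \<not> subgraph_of H (symmetrize G u v)"
  using nice_family_not_subgraph[OF assms(2)]
    subgraph_of_symmetrize_join_both[OF assms(3,5,6)] assms(4) by blast

end
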